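(* Let $A\in\mathbb{R}^{n\times n}$ and $\mathbf b\in\mathbb{R}^n$ satisfy $\operatorname{rank}(\mathbf b,A\mathbf b,\dots,A^{n-1}\mathbf b)=n$. Then for every $T>n$ and every initial state $(\mathbf y,\mathbf x^0)\in\mathbb{R}^n\times L^2([-1,0];\mathbb{R}^n)$ there exists a scalar control $u\in L^2(0,T)$ such that the solution of $\dot{\mathbf x}(t)=A\mathbf x(t-1)+\mathbf b u(t)$, $\mathbf x(0)=\mathbf y$, $\mathbf x(t)=\mathbf x^0(t)$ on $[-1,0)$, satisfies $\mathbf x(t)=0$ for all $t\in[T-1,T]$.
   Context: For $u\in L^2_{loc}(0,\infty)$ and initial data $\mathbf x(0)=\mathbf y\in\mathbb{R}^n$, $\mathbf x(t)=\mathbf x^0(t)$ for $t\in[-1,0)$ with $\mathbf x^0\in L^2([-1,0];\mathbb{R}^n)$, the system $\dot{\mathbf x}(t)=A\mathbf x(t-1)+\mathbf b u(t)$, $t\ge0$, has a unique continuous solution on $[0,\infty)$. *)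

theory Defs
  imports "HOL-Analysis.Analysis"
begin

text \<open>Matrix power (note: the operator ^ on vec types is componentwise, so we define it).\<close>
fun matpow :: "real^'n^'n \<Rightarrow> nat \<Rightarrow> real^'n^'n" where
  "matpow A 0 = mat 1"
| "matpow A (Suc k) = A ** matpow A k"

definition kalman_rank :: "real^'n^'n \<Rightarrow> real^'n \<Rightarrow> nat" where
  "kalman_rank A b = dim {matpow A k *v b | k. k < CARD('n)}"

definition L2_on :: "real set \<Rightarrow> (real \<Rightarrow> 'a::euclidean_space) \<Rightarrow> bool" where
  "L2_on S f \<longleftrightarrow> set_borel_measurable lebesgue S f
     \<and> set_integrable lebesgue S (\<lambda>t. (norm (f t))^2)"

definition delay_solution ::
  "real^'n^'n \<Rightarrow> real^'n \<Rightarrow> (real \<Rightarrow> real) \<Rightarrow> real^'n \<Rightarrow> (real \<Rightarrow> real^'n)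
   \<Rightarrow> real \<Rightarrow> (real \<Rightarrow> real^'n) \<Rightarrow> bool" where
  "delay_solution A b u y x0 T x \<longleftrightarrow>
     (\<forall>t\<in>{-1..<0}. x t = x0 t) \<and> x 0 = y \<and> continuous_on {0..T} x \<and>
     (\<forall>t\<in>{0..T}. ((\<lambda>s. A *v x (s - 1) + u s *\<^sub>R b) has_integral (x t - y)) {0..t})"

end

theory Submission
  imports Defs "HOL-Computational_Algebra.Polynomial"
begin

text \<open>Since the Kalman matrix has full rank there is a linear functional \<open>g\<close> with
  \<open>g (A\<^sup>k b) = 0\<close> for \<open>k < n - 1\<close> and \<open>g (A\<^sup>n\<^sup>-\<^sup>1 b) = 1\<close>, and the coordinates
  \<open>z\<^sub>k = g (A\<^sup>k x)\<close>, \<open>k < n\<close>, determine \<open>x\<close>. In them the system becomes a chain of delayed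
  integrators \<open>z\<^sub>k' t = z\<^sub>k\<^sub>+\<^sub>1 (t - 1)\<close> whose top equation
  \<open>z\<^sub>n\<^sub>-\<^sub>1' t = g (A\<^sup>n x (t - 1)) + u t\<close> carries the control, so \<open>u\<close> may be chosen to make
  \<open>z\<^sub>n\<^sub>-\<^sub>1'\<close> any prescribed function \<open>v\<close>.

  We add to the motion of the chain with \<open>v = 0\<close> the shifted iterated primitives \<open>\<phi>\<^sub>k (t + k)\<close>
  of a piecewise polynomial, started at \<open>t = 0\<close> for the top coordinate. Two-point Hermite
  interpolation on \<open>[n - 1, T - 1]\<close> makes \<open>z\<^sub>k\<close> vanish at \<open>T - 1 - k\<close> and switches \<open>v\<close> off
  at \<open>T - n\<close>; this interval is nonempty exactly because \<open>T > n\<close>. Going down the chain, each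
  \<open>z\<^sub>k\<close> then stays zero on \<open>[T - 1 - k, T]\<close>, so \<open>x = 0\<close> on \<open>[T - 1, T]\<close>; solutions are unique by the
  method of steps.\<close>

section \<open>Hermite interpolation\<close>

lemma higher_pderiv_eq_0_if_degree_less:
  fixes p :: "'a::{comm_semiring_1,semiring_no_zero_divisors} poly"
  assumes "degree p < k"
  shows "(pderiv ^^ k) p = 0"
  by (rule poly_eqI) (use assms in \<open>simp add: coeff_higher_pderiv coeff_eq_0\<close>)

lemma higher_pderiv_mult_linear_power:
  fixes p :: "'a::field_char_0 poly"
  assumes "k \<le> m"
  shows "\<exists>q. (pderiv ^^ k) (p * [:-c, 1:] ^ m) = q * [:-c, 1:] ^ (m - k)
           \<and> poly q c = fact m / fact (m - k) * poly p c"
  using assms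
proof (induction k)
  case 0
  then show ?case by auto
next
  case (Suc k)
  then obtain q where q: "(pderiv ^^ k) (p * [:-c, 1:] ^ m) = q * [:-c, 1:] ^ (m - k)"
    and q_c: "poly q c = fact m / fact (m - k) * poly p c"
    by auto
  obtain l where l: "m - k = Suc l"
    using Suc.prems by (metis Suc_diff_Suc Suc_le_lessD)
  define q' where "q' = pderiv q * [:-c, 1:] + smult (of_nat (Suc l)) q"
  have pderiv_linear: "pderiv [:-c, 1:] = 1"
    by (simp add: pderiv_pCons)
  have "(pderiv ^^ Suc k) (p * [:-c, 1:] ^ m) = pderiv (q * [:-c, 1:] ^ Suc l)"
    using q l by simp
  also have "\<dots> = pderiv q * [:-c, 1:] ^ Suc l + q * (smult (of_nat (Suc l)) ([:-c, 1:] ^ l) * pderiv [:-c, 1:])"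
    using pderiv_mult[of q "[:-c, 1:] ^ Suc l"] pderiv_power_Suc[of "[:-c, 1:]" l]
    by (simp add: ac_simps)
  also have "\<dots> = q' * [:-c, 1:] ^ l"
    by (simp only: q'_def pderiv_linear power_Suc algebra_simps mult_smult_left
        mult_smult_right mult_1_right mult_1_left)
  moreover have "m - Suc k = l"
    using l by arith
  ultimately have "(pderiv ^^ Suc k) (p * [:-c, 1:] ^ m) = q' * [:-c, 1:] ^ (m - Suc k)"
    by simp
  moreover have "poly q' c = fact m / fact (m - Suc k) * poly p c"
  proof -
    have "(of_nat (Suc l) :: 'a) \<noteq> 0"
      by (rule of_nat_neq_0)
    moreover have "fact (m - k) = (of_nat (Suc l) :: 'a) * fact l"
      using l by (simp only: fact_Suc of_nat_mult)
    ultimately show ?thesis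
      using q_c \<open>m - Suc k = l\<close> by (simp add: q'_def)
  qed
  ultimately show ?case by blast
qed

lemma poly_higher_pderiv_mult_linear_power_less:
  fixes p :: "'a::field_char_0 poly"
  assumes "k < m"
  shows "poly ((pderiv ^^ k) (p * [:-c, 1:] ^ m)) c = 0"
proof -
  obtain q where "(pderiv ^^ k) (p * [:-c, 1:] ^ m) = q * [:-c, 1:] ^ (m - k)"
    using higher_pderiv_mult_linear_power[of k m p c] assms by auto
  then show ?thesis
    using assms by (simp add: poly_power)
qed

lemma poly_higher_pderiv_mult_linear_power_eq:
  fixes p :: "'a::field_char_0 poly"
  shows "poly ((pderiv ^^ m) (p * [:-c, 1:] ^ m)) c = fact m * poly p c"
  using higher_pderiv_mult_linear_power[of m m p c] by auto

text \<open>Step \<open>N\<close> adds a multiple of \<open>(X - b)\<^sup>N\<close>, which does not change the lower derivatives at \<open>b\<close>.\<close>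

lemma weighted_hermite_interpolation:
  fixes p0 :: "'a::field_char_0 poly"
  assumes "poly p0 b \<noteq> 0"
  shows "\<exists>Q. (pderiv ^^ N) Q = 0 \<and> (\<forall>k<N. poly ((pderiv ^^ k) (p0 * Q)) b = r k)"
proof (induction N)
  case 0
  show ?case by (rule exI[of _ 0]) simp
next
  case (Suc N)
  then obtain Q where Q: "(pderiv ^^ N) Q = 0"
    and Q_b: "\<forall>k<N. poly ((pderiv ^^ k) (p0 * Q)) b = r k"
    by auto
  define c where "c = (r N - poly ((pderiv ^^ N) (p0 * Q)) b) / (fact N * poly p0 b)"
  define Q' where "Q' = Q + smult c ([:-b, 1:] ^ N)"
  have "(pderiv ^^ Suc N) Q' = pderiv ((pderiv ^^ N) Q) + smult c ((pderiv ^^ Suc N) ([:-b, 1:] ^ N))"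
    by (simp only: Q'_def higher_pderiv_add higher_pderiv_smult funpow.simps(2) o_apply pderiv_add pderiv_smult)
  also have "\<dots> = 0"
    using Q higher_pderiv_eq_0_if_degree_less[of "[:-b, 1:] ^ N" "Suc N"]
    by (simp add: degree_power_eq)
  finally have "(pderiv ^^ Suc N) Q' = 0" .
  moreover have "poly ((pderiv ^^ k) (p0 * Q')) b = r k" if "k < Suc N" for k
  proof -
    have eq: "(pderiv ^^ k) (p0 * Q')
        = (pderiv ^^ k) (p0 * Q) + smult c ((pderiv ^^ k) (p0 * [:-b, 1:] ^ N))"
      by (simp add: Q'_def distrib_left higher_pderiv_add higher_pderiv_smult[symmetric])
    show ?thesis
    proof (cases "k < N")
      case True
      then show ?thesis
        using eq Q_b poly_higher_pderiv_mult_linear_power_less[OF True, of p0 b] by simp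
    next
      case False
      then have "k = N"
        using that by simp
      then show ?thesis
        using eq assms poly_higher_pderiv_mult_linear_power_eq[of N p0 b] by (simp add: c_def)
    qed
  qed
  ultimately show ?case by blast
qed

lemma two_point_hermite_interpolation:
  fixes a b :: "'a::field_char_0"
  assumes "a \<noteq> b"
  shows "\<exists>G. \<forall>k<N. poly ((pderiv ^^ k) G) a = \<alpha> k \<and> poly ((pderiv ^^ k) G) b = \<beta> k"
proof -
  obtain G0 where G0: "\<forall>k<N. poly ((pderiv ^^ k) G0) a = \<alpha> k"
    using weighted_hermite_interpolation[of 1 a N \<alpha>] by auto
  have "poly ([:-a, 1:] ^ N) b \<noteq> 0"
    using assms by (simp add: poly_power)
  then obtain Q where Q: "\<forall>k<N. poly ((pderiv ^^ k) ([:-a, 1:] ^ N * Q)) b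
      = \<beta> k - poly ((pderiv ^^ k) G0) b"
    using weighted_hermite_interpolation[of "[:-a, 1:] ^ N" b N "\<lambda>k. \<beta> k - poly ((pderiv ^^ k) G0) b"]
    by auto
  have "poly ((pderiv ^^ k) (G0 + Q * [:-a, 1:] ^ N)) a = \<alpha> k" if "k < N" for k
    using G0 that poly_higher_pderiv_mult_linear_power_less[OF that, of Q a]
    by (simp add: higher_pderiv_add)
  moreover have "poly ((pderiv ^^ k) (G0 + Q * [:-a, 1:] ^ N)) b = \<beta> k" if "k < N" for k
    using Q that by (simp add: higher_pderiv_add mult.commute[of Q])
  ultimately show ?thesis by blast
qed

section \<open>Piecewise polynomial steering\<close>

text \<open>Away from \<open>a\<close> and \<open>b\<close>, \<open>glued_deriv a b G P k\<close> is the \<open>k\<close>-th derivative of the function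
  that vanishes before \<open>a\<close>, equals \<open>G\<close> on \<open>[a, b]\<close> and \<open>P\<close> after \<open>b\<close>.\<close>

definition glued_deriv :: "real \<Rightarrow> real \<Rightarrow> real poly \<Rightarrow> real poly \<Rightarrow> nat \<Rightarrow> real \<Rightarrow> real" where
  "glued_deriv a b G P k s =
     (if s < a then 0 else if s \<le> b then poly ((pderiv ^^ k) G) s else poly ((pderiv ^^ k) P) s)"

lemma glued_deriv_has_real_derivative:
  assumes "s \<noteq> a" "s \<noteq> b"
  shows "(glued_deriv a b G P k has_real_derivative glued_deriv a b G P (Suc k) s) (at s)"
proof -
  consider "s < a" | "a < s" "s < b" | "b < s" "a < s"
    using assms by linarith
  then show ?thesis
  proof cases
    case 1
    show ?thesis
      by (rule has_field_derivative_transform_within_open[of "\<lambda>_. 0" _ _ "{..<a}"])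
         (use 1 in \<open>auto simp: glued_deriv_def\<close>)
  next
    case 2
    show ?thesis
      by (rule has_field_derivative_transform_within_open[of "poly ((pderiv ^^ k) G)" _ _ "{a<..<b}"])
         (use 2 in \<open>auto simp: glued_deriv_def poly_DERIV\<close>)
  next
    case 3
    show ?thesis
      by (rule has_field_derivative_transform_within_open[of "poly ((pderiv ^^ k) P)" _ _ "{max a b<..}"])
         (use 3 in \<open>auto simp: glued_deriv_def poly_DERIV\<close>)
  qed
qed

lemma continuous_on_glued_deriv_right:
  assumes "a \<le> b" "poly ((pderiv ^^ k) G) b = poly ((pderiv ^^ k) P) b" "S \<subseteq> {a..}"
  shows "continuous_on S (glued_deriv a b G P k)"
proof -
  have "continuous_on S (\<lambda>s. if s \<le> b then poly ((pderiv ^^ k) G) s else poly ((pderiv ^^ k) P) s)"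
    by (rule continuous_on_cases_le) (auto intro: continuous_intros simp: assms)
  then show ?thesis
    by (rule continuous_on_eq) (use assms in \<open>auto simp: glued_deriv_def\<close>)
qed

lemma continuous_on_glued_deriv:
  assumes "a \<le> b" "poly ((pderiv ^^ k) G) a = 0"
    and "poly ((pderiv ^^ k) G) b = poly ((pderiv ^^ k) P) b"
  shows "continuous_on S (glued_deriv a b G P k)"
proof -
  have eq: "glued_deriv a b G P k = (\<lambda>s. if s \<le> a then 0 else glued_deriv a b G P k s)"
    using assms by (auto simp: glued_deriv_def fun_eq_iff)
  have "continuous_on S (\<lambda>s. if s \<le> a then 0 else glued_deriv a b G P k s)"
    by (rule continuous_on_cases_le[OF continuous_on_const continuous_on_glued_deriv_right])
       (use assms in \<open>auto simp: glued_deriv_def\<close>)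
  then show ?thesis
    using eq by metis
qed

lemma glued_deriv_has_integral:
  assumes "p \<le> q" "continuous_on {p..q} (glued_deriv a b G P k)"
  shows "(glued_deriv a b G P (Suc k) has_integral
           glued_deriv a b G P k q - glued_deriv a b G P k p) {p..q}"
proof (rule fundamental_theorem_of_calculus_interior_strong[of "{a, b}"])
  show "(glued_deriv a b G P k has_vector_derivative glued_deriv a b G P (Suc k) s) (at s)"
    if "s \<in> {p<..<q} - {a, b}" for s
    using glued_deriv_has_real_derivative[of s a b G P k] that
    by (auto simp: has_real_derivative_iff_has_vector_derivative)
qed (use assms in auto)

text \<open>After \<open>b\<close>, \<open>\<phi> 0\<close> is a polynomial with vanishing \<open>N\<close>-th derivative and the prescribed
  derivatives \<open>r\<close> at \<open>b\<close>; on \<open>[a, b]\<close> a two-point Hermite interpolant joins it to zero.\<close>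

lemma polynomial_steering:
  fixes a b c :: real and r :: "nat \<Rightarrow> real"
  assumes "a < b"
  obtains \<phi> :: "nat \<Rightarrow> real \<Rightarrow> real" where
    "\<And>k s. s < a \<Longrightarrow> \<phi> k s = 0"
    "\<And>k. k < N \<Longrightarrow> continuous_on UNIV (\<phi> k)"
    "continuous_on {a..} (\<phi> N)"
    "\<And>k. k < N \<Longrightarrow> \<phi> k b = r k"
    "\<phi> N a = c"
    "\<And>s. b \<le> s \<Longrightarrow> \<phi> N s = 0"
    "\<And>k p q. p \<le> q \<Longrightarrow> continuous_on {p..q} (\<phi> k) \<Longrightarrow>
       (\<phi> (Suc k) has_integral \<phi> k q - \<phi> k p) {p..q}"
    "continuous_on {a..b} (\<phi> (Suc N))"
    "\<And>s. b < s \<Longrightarrow> \<phi> (Suc N) s = 0"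
proof -
  obtain P where P_N: "(pderiv ^^ N) P = 0" and P_b: "\<forall>k<N. poly ((pderiv ^^ k) (1 * P)) b = r k"
    using weighted_hermite_interpolation[of 1 b N r] by auto
  obtain G where G: "\<forall>k<Suc N. poly ((pderiv ^^ k) G) a = (if k = N then c else 0)
      \<and> poly ((pderiv ^^ k) G) b = poly ((pderiv ^^ k) P) b"
    using two_point_hermite_interpolation[of a b "Suc N"] assms by fastforce
  let ?\<phi> = "glued_deriv a b G P"
  show ?thesis
  proof (rule that[of ?\<phi>])
    show "?\<phi> k s = 0" if "s < a" for k s
      using that by (simp add: glued_deriv_def)
    show "continuous_on UNIV (?\<phi> k)" if "k < N" for k
      using G that assms by (intro continuous_on_glued_deriv) auto
    show "continuous_on {a..} (?\<phi> N)"
      using G assms by (intro continuous_on_glued_deriv_right) auto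
    show "?\<phi> k b = r k" if "k < N" for k
      using G P_b that assms by (simp add: glued_deriv_def)
    show "?\<phi> N a = c"
      using G assms by (simp add: glued_deriv_def)
    show "?\<phi> N s = 0" if "b \<le> s" for s
      using G P_N that assms by (auto simp: glued_deriv_def)
    show "(?\<phi> (Suc k) has_integral ?\<phi> k q - ?\<phi> k p) {p..q}"
      if "p \<le> q" "continuous_on {p..q} (?\<phi> k)" for k p q
      using that by (rule glued_deriv_has_integral)
    show "continuous_on {a..b} (?\<phi> (Suc N))"
      by (rule continuous_on_eq[of _ "poly ((pderiv ^^ Suc N) G)"])
         (auto intro: continuous_intros simp: glued_deriv_def)
    show "?\<phi> (Suc N) s = 0" if "b < s" for s
      using P_N that assms by (simp add: glued_deriv_def)
  qed
qed

section \<open>Square integrable functions on subsets of the line\<close>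

lemma L2_on_iff_indicator: "L2_on S f \<longleftrightarrow> L2_on UNIV (\<lambda>t. indicator S t *\<^sub>R f t)"
proof -
  have "(\<lambda>t. indicator S t *\<^sub>R (norm (f t))\<^sup>2) = (\<lambda>t. (norm (indicator S t *\<^sub>R f t))\<^sup>2)"
    by (auto simp: indicator_def)
  then show ?thesis
    by (simp add: L2_on_def set_integrable_def set_borel_measurable_def)
qed

lemma L2_on_UNIV_iff:
  "L2_on UNIV f \<longleftrightarrow> f \<in> borel_measurable lebesgue \<and> integrable lebesgue (\<lambda>t. (norm (f t))\<^sup>2)"
  by (simp add: L2_on_def set_integrable_def set_borel_measurable_def)

lemma L2_on_cong: "(\<And>t. t \<in> S \<Longrightarrow> f t = g t) \<Longrightarrow> L2_on S f \<longleftrightarrow> L2_on S g"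
proof -
  assume "\<And>t. t \<in> S \<Longrightarrow> f t = g t"
  then have "(\<lambda>t. indicator S t *\<^sub>R f t) = (\<lambda>t. indicator S t *\<^sub>R g t)"
    by (auto simp: indicator_def fun_eq_iff)
  then show ?thesis
    by (simp add: L2_on_iff_indicator[of S f] L2_on_iff_indicator[of S g])
qed

lemma L2_on_UNIV_dominated:
  fixes f :: "real \<Rightarrow> 'a::euclidean_space"
  assumes "f \<in> borel_measurable lebesgue" "integrable lebesgue h"
    and "\<And>t. (norm (f t))\<^sup>2 \<le> h t"
  shows "L2_on UNIV f"
  unfolding L2_on_UNIV_iff
proof
  show "integrable lebesgue (\<lambda>t. (norm (f t))\<^sup>2)"
    by (rule Bochner_Integration.integrable_bound[OF assms(2)], use assms(1) in measurable)
       (rule AE_I2, use assms(3) in \<open>auto intro: order_trans[OF _ abs_ge_self]\<close>)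
qed (fact assms(1))

lemma L2_on_add:
  fixes f g :: "real \<Rightarrow> 'a::euclidean_space"
  assumes "L2_on S f" "L2_on S g"
  shows "L2_on S (\<lambda>t. f t + g t)"
proof -
  let ?F = "\<lambda>t. indicator S t *\<^sub>R f t" and ?G = "\<lambda>t. indicator S t *\<^sub>R g t"
  have F: "?F \<in> borel_measurable lebesgue" "integrable lebesgue (\<lambda>t. (norm (?F t))\<^sup>2)"
   and G: "?G \<in> borel_measurable lebesgue" "integrable lebesgue (\<lambda>t. (norm (?G t))\<^sup>2)"
    using assms by (simp_all add: L2_on_iff_indicator[of S] L2_on_UNIV_iff)
  have "(norm (?F t + ?G t))\<^sup>2 \<le> 2 * (norm (?F t))\<^sup>2 + 2 * (norm (?G t))\<^sup>2" for t
  proof -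
    have "(norm (?F t + ?G t))\<^sup>2 \<le> (norm (?F t) + norm (?G t))\<^sup>2"
      by (intro power_mono norm_triangle_ineq) simp
    also have "\<dots> \<le> 2 * (norm (?F t))\<^sup>2 + 2 * (norm (?G t))\<^sup>2"
      using zero_le_power2[of "norm (?F t) - norm (?G t)"] by (simp only: power2_eq_square algebra_simps)
    finally show ?thesis .
  qed
  then have "L2_on UNIV (\<lambda>t. ?F t + ?G t)"
    by (rule L2_on_UNIV_dominated[rotated 2]) (use F G in auto)
  then show ?thesis
    by (simp add: L2_on_iff_indicator[of S] scaleR_add_right)
qed

lemma L2_on_bounded_linear:
  fixes f :: "real \<Rightarrow> 'a::euclidean_space" and h :: "'a \<Rightarrow> 'b::euclidean_space"
  assumes "bounded_linear h" "L2_on S f"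
  shows "L2_on S (\<lambda>t. h (f t))"
proof -
  let ?F = "\<lambda>t. indicator S t *\<^sub>R f t"
  have F: "?F \<in> borel_measurable lebesgue" "integrable lebesgue (\<lambda>t. (norm (?F t))\<^sup>2)"
    using assms(2) by (simp_all add: L2_on_iff_indicator[of S] L2_on_UNIV_iff)
  obtain K where K: "\<And>x. norm (h x) \<le> norm x * K"
    using bounded_linear.bounded[OF assms(1)] by blast
  have "h \<in> borel_measurable borel"
    by (intro borel_measurable_continuous_onI linear_continuous_on assms(1))
  then have "(\<lambda>t. h (?F t)) \<in> borel_measurable lebesgue"
    using F(1) by (rule measurable_compose[rotated])
  moreover have "(norm (h (?F t)))\<^sup>2 \<le> K\<^sup>2 * (norm (?F t))\<^sup>2" for t
    using power_mono[OF K[of "?F t"]] by (simp add: power_mult_distrib mult.commute)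
  ultimately have "L2_on UNIV (\<lambda>t. h (?F t))"
    using F(2) by (intro L2_on_UNIV_dominated[where h = "\<lambda>t. K\<^sup>2 * (norm (?F t))\<^sup>2"]) auto
  then show ?thesis
    by (simp add: L2_on_iff_indicator[of S] linear_scale[OF bounded_linear.linear[OF assms(1)]])
qed

lemma L2_on_diff:
  fixes f g :: "real \<Rightarrow> 'a::euclidean_space"
  assumes "L2_on S f" "L2_on S g"
  shows "L2_on S (\<lambda>t. f t - g t)"
  using L2_on_add[OF assms(1) L2_on_bounded_linear[OF bounded_linear_scaleR_right[of "-1"] assms(2)]]
  by simp

lemma L2_on_subset:
  assumes "L2_on S f" "S' \<in> sets lebesgue" "S' \<subseteq> S"
  shows "L2_on S' f"
proof -
  have F: "(\<lambda>t. indicator S t *\<^sub>R f t) \<in> borel_measurable lebesgue"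
    using assms(1) by (simp add: L2_on_def set_borel_measurable_def)
  have eq: "(\<lambda>t. indicator S' t *\<^sub>R f t) = (\<lambda>t. indicator S' t *\<^sub>R (indicator S t *\<^sub>R f t))"
    using assms(3) by (auto simp: indicator_def fun_eq_iff)
  have "(\<lambda>t. indicator S' t *\<^sub>R f t) \<in> borel_measurable lebesgue"
    unfolding eq by (rule borel_measurable_scaleR[OF borel_measurable_indicator[OF assms(2)] F])
  then show ?thesis
    using assms set_integrable_subset unfolding L2_on_def set_borel_measurable_def by blast
qed

lemma L2_on_Un:
  assumes "L2_on S f" "L2_on S' f" "S \<in> sets lebesgue" "S' \<in> sets lebesgue"
  shows "L2_on (S \<union> S') f"
proof -
  have F: "(\<lambda>t. indicator S t *\<^sub>R f t) \<in> borel_measurable lebesgue"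
    and F': "(\<lambda>t. indicator S' t *\<^sub>R f t) \<in> borel_measurable lebesgue"
    using assms(1,2) by (simp_all add: L2_on_def set_borel_measurable_def)
  have "(\<lambda>t. indicator S t *\<^sub>R f t + indicator (S' - S) t *\<^sub>R (indicator S' t *\<^sub>R f t))
      \<in> borel_measurable lebesgue"
    using borel_measurable_add[OF F borel_measurable_scaleR[OF borel_measurable_indicator[OF sets.Diff[OF assms(4,3)]] F']] .
  moreover have "(\<lambda>t. indicator S t *\<^sub>R f t + indicator (S' - S) t *\<^sub>R (indicator S' t *\<^sub>R f t))
      = (\<lambda>t. indicator (S \<union> S') t *\<^sub>R f t)"
    by (auto simp: indicator_def fun_eq_iff)
  moreover have "set_integrable lebesgue (S \<union> S') (\<lambda>t. (norm (f t))\<^sup>2)"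
    using assms by (intro set_integrable_Un) (auto simp: L2_on_def)
  ultimately show ?thesis
    unfolding L2_on_def set_borel_measurable_def by simp
qed

lemma L2_on_translate:
  fixes f :: "real \<Rightarrow> 'a::euclidean_space"
  assumes "L2_on S f"
  shows "L2_on ((+) c ` S) (\<lambda>t. f (t - c))"
proof -
  let ?F = "\<lambda>t. indicator S t *\<^sub>R f t"
  have F: "?F \<in> borel_measurable lebesgue" "integrable lebesgue (\<lambda>t. (norm (?F t))\<^sup>2)"
    using assms by (simp_all add: L2_on_iff_indicator[of S] L2_on_UNIV_iff)
  have "(\<lambda>t. ?F (- c + 1 *\<^sub>R t)) \<in> borel_measurable lebesgue"
    by (rule borel_measurable_affine[OF F(1)]) simp
  moreover have "integrable lebesgue (\<lambda>t. (norm (?F (- c + 1 * t)))\<^sup>2)"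
    by (rule lebesgue_integrable_real_affine[OF F(2)]) simp
  moreover have "indicator ((+) c ` S) t = (indicator S (t - c) :: real)" for t
    by (force simp: indicator_def)
  ultimately show ?thesis
    by (simp add: L2_on_iff_indicator[of "(+) c ` S"] L2_on_UNIV_iff)
qed

lemma L2_on_continuous:
  fixes f :: "real \<Rightarrow> 'a::euclidean_space"
  assumes "continuous_on {p..q} f" "S \<subseteq> {p..q}" "S \<in> sets borel"
  shows "L2_on S f"
proof -
  obtain M where "\<forall>t\<in>{p..q}. norm (f t) \<le> M"
    using compact_imp_bounded[OF compact_continuous_image[OF assms(1) compact_Icc]]
    unfolding bounded_iff by auto
  then have M: "\<And>t. t \<in> {p..q} \<Longrightarrow> norm (f t) \<le> M" by blast
  have "(\<lambda>t. indicator S t *\<^sub>R f t) \<in> borel_measurable lebesgue"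
    using borel_measurable_continuous_on_indicator[OF assms(3) continuous_on_subset[OF assms(1,2)]]
    by (metis measurable_lborel2 measurable_completion)
  moreover have "integrable lebesgue (\<lambda>t. M\<^sup>2 * indicator {p..q} t :: real)"
    by (simp add: integrable_indicator_iff emeasure_lborel_Icc_eq)
  moreover have "(norm (indicator S t *\<^sub>R f t))\<^sup>2 \<le> M\<^sup>2 * indicator {p..q} t" for t
    using assms(2) M[of t] by (auto simp: indicator_def intro: power_mono)
  ultimately show ?thesis
    unfolding L2_on_iff_indicator[of S] by (rule L2_on_UNIV_dominated)
qed

lemma L2_on_imp_integrable_on:
  fixes f :: "real \<Rightarrow> 'a::euclidean_space"
  assumes "L2_on {p..q} f"
  shows "f integrable_on {p..q}"
proof -
  let ?F = "\<lambda>t. indicator {p..q} t *\<^sub>R f t"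
  have F: "?F \<in> borel_measurable lebesgue" "integrable lebesgue (\<lambda>t. (norm (?F t))\<^sup>2)"
    using assms by (simp_all add: L2_on_iff_indicator[of "{p..q}"] L2_on_UNIV_iff)
  have dominant: "integrable lebesgue (\<lambda>t. indicator {p..q} t + (norm (?F t))\<^sup>2 :: real)"
    using F(2) by (simp add: integrable_indicator_iff emeasure_lborel_Icc_eq)
  have "x \<le> 1 + x\<^sup>2" for x :: real
    using zero_le_power2[of "2 * x - 1"] by (simp add: power2_eq_square algebra_simps)
  then have "norm (?F t) \<le> norm (indicator {p..q} t + (norm (?F t))\<^sup>2 :: real)" for t
    by (cases "t \<in> {p..q}") auto
  then have "integrable lebesgue ?F"
    by (rule Bochner_Integration.integrable_bound[OF dominant F(1) AE_I2])
  then show ?thesis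
    by (intro set_lebesgue_integral_eq_integral(1)) (simp add: set_integrable_def)
qed

lemma L2_on_continuous_vanishing_after:
  fixes f :: "real \<Rightarrow> 'a::euclidean_space"
  assumes "continuous_on {p..q} f" "\<And>s. q < s \<Longrightarrow> f s = 0"
  shows "L2_on {p<..<r} f"
proof -
  have "L2_on {p<..q} f"
    by (rule L2_on_continuous[OF assms(1)]) auto
  moreover have "L2_on {q<..<r} (\<lambda>_. 0 :: 'a)"
    by (rule L2_on_continuous[of q r]) auto
  then have "L2_on {q<..<r} f"
    by (subst L2_on_cong[of _ _ "\<lambda>_. 0"]) (auto simp: assms(2))
  ultimately have "L2_on ({p<..q} \<union> {q<..<r}) f"
    by (rule L2_on_Un) auto
  then show ?thesis
    by (rule L2_on_subset) auto
qed

lemma L2_on_delayed: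
  fixes f :: "real \<Rightarrow> 'a::euclidean_space"
  assumes "L2_on {-1..<0} f" "continuous_on {0..c} f" "0 \<le> c"
  shows "L2_on {0<..<c + 1} (\<lambda>s. f (s - 1))"
proof -
  have "(+) 1 ` {-1..<0} = {0..<1::real}"
    by (auto simp: image_iff intro: bexI[of _ "_ - 1"])
  then have "L2_on {0..<1} (\<lambda>s. f (s - 1))"
    using L2_on_translate[OF assms(1), of 1] by simp
  then have "L2_on {0<..<1} (\<lambda>s. f (s - 1))"
    by (rule L2_on_subset) auto
  moreover have "L2_on {1..<c + 1} (\<lambda>s. f (s - 1))"
    by (rule L2_on_continuous[of 1 "c + 1"])
       (auto intro!: continuous_on_compose2[OF assms(2)] continuous_intros)
  ultimately have "L2_on ({0<..<1} \<union> {1..<c + 1}) (\<lambda>s. f (s - 1))"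
    by (rule L2_on_Un) auto
  moreover have "{0<..<1} \<union> {1..<c + 1} = {0<..<c + 1}"
    using assms(3) by auto
  ultimately show ?thesis
    by simp
qed

section \<open>The chain of delayed integrators\<close>

text \<open>The solution of \<open>z\<^sub>k' t = z\<^sub>k\<^sub>+\<^sub>1 (t - 1)\<close> (\<open>k < N\<close>) with history \<open>dat\<close> and initial values
  \<open>iv\<close>. The top coordinate is kept at \<open>0\<close> on \<open>[0, \<infinity>)\<close>, ignoring \<open>iv N\<close>: its initial value is
  supplied by the steering term instead.\<close>

function free_chain :: "(nat \<Rightarrow> real \<Rightarrow> real) \<Rightarrow> (nat \<Rightarrow> real) \<Rightarrow> nat \<Rightarrow> nat \<Rightarrow> real \<Rightarrow> real" where
  "free_chain dat iv N k r =
     (if r < 0 then dat k r else if N \<le> k then 0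
      else iv k + integral {0..r} (\<lambda>s. free_chain dat iv N (Suc k) (s - 1)))"
  by auto
termination
  by (relation "Wellfounded.measure (\<lambda>(dat, iv, N, k, r). N - k)") auto

declare free_chain.simps [simp del]

lemma free_chain_history: "r < 0 \<Longrightarrow> free_chain dat iv N k r = dat k r"
  by (subst free_chain.simps) simp

lemma free_chain_top: "N \<le> k \<Longrightarrow> 0 \<le> r \<Longrightarrow> free_chain dat iv N k r = 0"
  by (subst free_chain.simps) simp

lemma free_chain_step:
  "k < N \<Longrightarrow> 0 \<le> r \<Longrightarrow>
     free_chain dat iv N k r = iv k + integral {0..r} (\<lambda>s. free_chain dat iv N (Suc k) (s - 1))"
  by (subst free_chain.simps) simp

lemma free_chain_integrable_continuous:
  assumes dat: "\<And>k. dat k integrable_on {-1..0}" and "0 \<le> t"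
  shows "free_chain dat iv N k integrable_on {-1..t} \<and> continuous_on {0..t} (free_chain dat iv N k)"
  using \<open>0 \<le> t\<close>
proof (induction "N - k" arbitrary: k t)
  case 0
  have cont: "continuous_on {0..t} (free_chain dat iv N k)"
    by (rule continuous_on_eq[of _ "\<lambda>_. 0"]) (use 0 in \<open>auto simp: free_chain_top\<close>)
  have hist: "free_chain dat iv N k integrable_on {-1..0}"
    by (rule integrable_spike_finite[of "{0}" _ _ "dat k"]) (auto simp: free_chain_history intro: dat)
  show ?case
    using Henstock_Kurzweil_Integration.integrable_combine[OF _ \<open>0 \<le> t\<close> hist
        integrable_continuous_interval[OF cont]] cont
    by simp
next
  case (Suc m)
  then have "N - Suc k = m"
    by arith
  then have "free_chain dat iv N (Suc k) integrable_on {-1..t}"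
    using Suc by blast
  then have "(\<lambda>s. free_chain dat iv N (Suc k) (s - 1)) integrable_on {0..t + 1}"
    using integrable_shift_real_ivl[of _ "-1" t "-1"] by simp
  then have "(\<lambda>s. free_chain dat iv N (Suc k) (s - 1)) integrable_on {0..r}" if "r \<le> t" for r
    by (rule integrable_subinterval_real) (use that in auto)
  then have step: "continuous_on {0..t} (\<lambda>r. iv k + integral {0..r} (\<lambda>s. free_chain dat iv N (Suc k) (s - 1)))"
    by (intro continuous_intros indefinite_integral_continuous_1) simp
  have "k < N"
    using Suc.hyps by arith
  then have cont: "continuous_on {0..t} (free_chain dat iv N k)"
    by (intro continuous_on_eq[OF step]) (simp add: free_chain_step)
  have hist: "free_chain dat iv N k integrable_on {-1..0}"
    by (rule integrable_spike_finite[of "{0}" _ _ "dat k"]) (auto simp: free_chain_history intro: dat)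
  show ?case
    using Henstock_Kurzweil_Integration.integrable_combine[OF _ \<open>0 \<le> t\<close> hist
        integrable_continuous_interval[OF cont]] cont
    by simp
qed

lemma free_chain_has_integral:
  assumes "\<And>k. dat k integrable_on {-1..0}" "k < N" "0 \<le> t"
  shows "((\<lambda>s. free_chain dat iv N (Suc k) (s - 1)) has_integral (free_chain dat iv N k t - iv k)) {0..t}"
proof -
  have "free_chain dat iv N (Suc k) integrable_on {-1..t}"
    using free_chain_integrable_continuous assms(1,3) by blast
  then have "(\<lambda>s. free_chain dat iv N (Suc k) (s - 1)) integrable_on {0..t + 1}"
    using integrable_shift_real_ivl[of _ "-1" t "-1"] by simp
  then have "(\<lambda>s. free_chain dat iv N (Suc k) (s - 1)) integrable_on {0..t}"
    by (rule integrable_subinterval_real) auto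
  then show ?thesis
    using assms(2,3) by (simp add: free_chain_step integrable_integral)
qed

lemma delay_chain_vanishing:
  fixes z :: "nat \<Rightarrow> real \<Rightarrow> real"
  assumes chain: "\<And>k t. k < N \<Longrightarrow> 0 \<le> t \<Longrightarrow>
      ((\<lambda>s. z (Suc k) (s - 1)) has_integral (z k t - z k 0)) {0..t}"
    and target: "\<And>k. k < N \<Longrightarrow> z k (T - 1 - real k) = 0"
    and top: "\<And>t. T - 1 - real N \<le> t \<Longrightarrow> t \<le> T \<Longrightarrow> z N t = 0"
    and "real N + 1 \<le> T"
  shows "k \<le> N \<Longrightarrow> T - 1 - real k \<le> t \<Longrightarrow> t \<le> T \<Longrightarrow> z k t = 0"
proof (induction "N - k" arbitrary: k t)
  case 0
  then show ?case
    using top by simp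
next
  case (Suc m)
  define c where "c = T - 1 - real k"
  have "k < N" "N - Suc k = m"
    using Suc.hyps by arith+
  have "0 \<le> c" "c \<le> t"
    using \<open>k < N\<close> \<open>real N + 1 \<le> T\<close> Suc.prems by (auto simp: c_def)
  have IH: "z (Suc k) r = 0" if "T - 1 - real (Suc k) \<le> r" "r \<le> T" for r
    using Suc.hyps(1)[of "Suc k" r] \<open>N - Suc k = m\<close> \<open>k < N\<close> that by simp
  have "z (Suc k) (s - 1) = 0" if "s \<in> {c..t}" for s
    using that Suc.prems by (intro IH) (auto simp: c_def)
  then have "((\<lambda>s. z (Suc k) (s - 1)) has_integral 0) {c..t}"
    by (subst has_integral_cong[of _ _ "\<lambda>_. 0"]) auto
  then have "((\<lambda>s. z (Suc k) (s - 1)) has_integral (z k c - z k 0 + 0)) {0..t}"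
    by (rule has_integral_combine[OF \<open>0 \<le> c\<close> \<open>c \<le> t\<close> chain[OF \<open>k < N\<close> \<open>0 \<le> c\<close>]])
  moreover have "((\<lambda>s. z (Suc k) (s - 1)) has_integral (z k t - z k 0)) {0..t}"
    using chain \<open>k < N\<close> \<open>0 \<le> c\<close> \<open>c \<le> t\<close> by simp
  ultimately have "z k c - z k 0 + 0 = z k t - z k 0"
    by (rule has_integral_unique)
  then show ?case
    using target[OF \<open>k < N\<close>] by (simp add: c_def)
qed

lemma free_chain_add_shifted_primitives:
  fixes dat :: "nat \<Rightarrow> real \<Rightarrow> real" and \<phi> :: "nat \<Rightarrow> real \<Rightarrow> real"
  assumes dat: "\<And>k. dat k integrable_on {-1..0}" and "0 \<le> T"
    and \<phi>_before: "\<And>k s. s < real N \<Longrightarrow> \<phi> k s = 0"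
    and \<phi>_cont: "\<And>k. k < N \<Longrightarrow> continuous_on UNIV (\<phi> k)"
    and \<phi>_cont_top: "continuous_on {real N..} (\<phi> N)"
    and \<phi>_start: "\<phi> N (real N) = iv N"
    and \<phi>_ftc: "\<And>k p q. p \<le> q \<Longrightarrow> continuous_on {p..q} (\<phi> k) \<Longrightarrow>
       (\<phi> (Suc k) has_integral \<phi> k q - \<phi> k p) {p..q}"
    and z_def: "z = (\<lambda>k t. free_chain dat iv N k t + \<phi> k (t + real k))"
  shows "\<And>k t. t < 0 \<Longrightarrow> k \<le> N \<Longrightarrow> z k t = dat k t"
    and "\<And>k. k \<le> N \<Longrightarrow> z k 0 = iv k"
    and "\<And>k. k \<le> N \<Longrightarrow> continuous_on {0..T} (z k)"
    and "\<And>k t. k < N \<Longrightarrow> 0 \<le> t \<Longrightarrow> ((\<lambda>s. z (Suc k) (s - 1)) has_integral (z k t - z k 0)) {0..t}"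
    and "\<And>t. 0 \<le> t \<Longrightarrow> ((\<lambda>s. \<phi> (Suc N) (s + real N)) has_integral (z N t - z N 0)) {0..t}"
proof -
  let ?D = "free_chain dat iv N"
  have \<phi>_shifted: "((\<lambda>s. \<phi> (Suc k) (s + real k)) has_integral \<phi> k (t + real k) - \<phi> k (real k)) {0..t}"
    if "0 \<le> t" "continuous_on {real k..t + real k} (\<phi> k)" for k t
    using has_integral_shift_real_ivl[OF \<phi>_ftc[OF _ that(2)], of "real k"] that(1) by simp
  show "z k t = dat k t" if "t < 0" "k \<le> N" for k t
    using that by (simp add: z_def free_chain_history \<phi>_before)
  show "z k 0 = iv k" if "k \<le> N" for k
    using that \<phi>_start by (cases "k < N") (simp_all add: z_def free_chain_step free_chain_top \<phi>_before)
  show "continuous_on {0..T} (z k)" if "k \<le> N" for k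
  proof -
    have "continuous_on {0..T} (\<lambda>t. \<phi> k (t + real k))"
    proof (cases "k < N")
      case True
      then show ?thesis
        by (intro continuous_on_compose2[OF \<phi>_cont[OF True]] continuous_intros) auto
    next
      case False
      with that have "k = N"
        by simp
      then show ?thesis
        by (auto intro!: continuous_on_compose2[OF \<phi>_cont_top] continuous_intros)
    qed
    then show ?thesis
      using free_chain_integrable_continuous[OF dat \<open>0 \<le> T\<close>] unfolding z_def
      by (intro continuous_intros) auto
  qed
  show "((\<lambda>s. z (Suc k) (s - 1)) has_integral (z k t - z k 0)) {0..t}" if "k < N" "0 \<le> t" for k t
  proof -
    have "((\<lambda>s. ?D (Suc k) (s - 1) + \<phi> (Suc k) (s + real k)) has_integral
        ((?D k t - iv k) + (\<phi> k (t + real k) - \<phi> k (real k)))) {0..t}"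
      using free_chain_has_integral[OF dat that] \<phi>_shifted[OF that(2) continuous_on_subset[OF \<phi>_cont[OF that(1)]]]
      by (intro has_integral_add) auto
    moreover have "?D k 0 = iv k" "\<phi> k (real k) = 0"
      using that by (simp_all add: free_chain_step \<phi>_before)
    ultimately show ?thesis
      by (simp add: z_def algebra_simps)
  qed
  show "((\<lambda>s. \<phi> (Suc N) (s + real N)) has_integral (z N t - z N 0)) {0..t}" if "0 \<le> t" for t
    using \<phi>_shifted[OF that continuous_on_subset[OF \<phi>_cont_top]] that \<phi>_start
    by (simp add: z_def free_chain_top)
qed

lemma delay_chain_null_controllable:
  fixes dat :: "nat \<Rightarrow> real \<Rightarrow> real" and iv :: "nat \<Rightarrow> real"
  assumes dat: "\<And>k. dat k integrable_on {-1..0}" and T: "real N + 1 < T"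
  obtains z :: "nat \<Rightarrow> real \<Rightarrow> real" and v :: "real \<Rightarrow> real" where
    "\<And>k t. t < 0 \<Longrightarrow> k \<le> N \<Longrightarrow> z k t = dat k t"
    "\<And>k. k \<le> N \<Longrightarrow> z k 0 = iv k"
    "\<And>k. k \<le> N \<Longrightarrow> continuous_on {0..T} (z k)"
    "\<And>k t. k < N \<Longrightarrow> 0 \<le> t \<Longrightarrow> ((\<lambda>s. z (Suc k) (s - 1)) has_integral (z k t - z k 0)) {0..t}"
    "\<And>t. 0 \<le> t \<Longrightarrow> (v has_integral (z N t - z N 0)) {0..t}"
    "\<And>k t. k \<le> N \<Longrightarrow> T - 1 \<le> t \<Longrightarrow> t \<le> T \<Longrightarrow> z k t = 0"
    "L2_on {0<..<T} v"
proof -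
  let ?D = "free_chain dat iv N"
  obtain \<phi> where \<phi>_before: "\<And>k s. s < real N \<Longrightarrow> \<phi> k s = 0"
    and \<phi>_cont: "\<And>k. k < N \<Longrightarrow> continuous_on UNIV (\<phi> k)"
    and \<phi>_cont_top: "continuous_on {real N..} (\<phi> N)"
    and \<phi>_target: "\<And>k. k < N \<Longrightarrow> \<phi> k (T - 1) = - ?D k (T - 1 - real k)"
    and \<phi>_start: "\<phi> N (real N) = iv N"
    and \<phi>_stop: "\<And>s. T - 1 \<le> s \<Longrightarrow> \<phi> N s = 0"
    and \<phi>_ftc: "\<And>k p q. p \<le> q \<Longrightarrow> continuous_on {p..q} (\<phi> k) \<Longrightarrow>
       (\<phi> (Suc k) has_integral \<phi> k q - \<phi> k p) {p..q}"
    and \<phi>_control_cont: "continuous_on {real N..T - 1} (\<phi> (Suc N))"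
    and \<phi>_control_stop: "\<And>s. T - 1 < s \<Longrightarrow> \<phi> (Suc N) s = 0"
    using polynomial_steering[where a = "real N" and b = "T - 1" and c = "iv N" and N = N
        and r = "\<lambda>k. - ?D k (T - 1 - real k)"] T
    by auto
  define z where "z = (\<lambda>k t. ?D k t + \<phi> k (t + real k))"
  define v where "v = (\<lambda>s. \<phi> (Suc N) (s + real N))"
  have "0 \<le> T"
    using T by simp
  note z = free_chain_add_shifted_primitives[OF dat \<open>0 \<le> T\<close> \<phi>_before \<phi>_cont \<phi>_cont_top \<phi>_start
      \<phi>_ftc z_def]
  show ?thesis
  proof (rule that[OF z(1-4) z(5)[folded v_def]])
    show "z k t = 0" if "k \<le> N" "T - 1 \<le> t" "t \<le> T" for k t
    proof (rule delay_chain_vanishing[where z = z and N = N and T = T, OF z(4)])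
      show "z k (T - 1 - real k) = 0" if "k < N" for k
        using \<phi>_target[OF that] by (simp add: z_def)
      show "z N t = 0" if "T - 1 - real N \<le> t" "t \<le> T" for t
        using that T \<phi>_stop by (simp add: z_def free_chain_top)
    qed (use that T in auto)
    show "L2_on {0<..<T} v"
    proof (rule L2_on_continuous_vanishing_after)
      show "continuous_on {0..T - 1 - real N} v"
        by (auto simp: v_def intro!: continuous_on_compose2[OF \<phi>_control_cont] continuous_intros)
      show "v s = 0" if "T - 1 - real N < s" for s
        using that by (simp add: v_def \<phi>_control_stop)
    qed
  qed
qed

section \<open>Observer coordinates of a controllable pair\<close>

lemma matpow_add: "matpow A (j + k) = matpow A j ** matpow A k"
  by (induction j) (simp_all add: matrix_mul_assoc)

lemma matpow_mult_matpow_vec: "matpow A j *v (matpow A k *v v) = matpow A (j + k) *v v"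
  by (simp add: matpow_add matrix_vector_mul_assoc)

lemma matpow_mult_vec_Suc: "matpow A k *v (A *v v) = matpow A (Suc k) *v v"
  using matpow_mult_matpow_vec[of A k 1 v] by simp

lemma kalman_rank_full_imp_basis:
  fixes A :: "real^'n^'n" and b :: "real^'n"
  assumes "kalman_rank A b = CARD('n)"
  shows "inj_on (\<lambda>k. matpow A k *v b) {..<CARD('n)}"
    and "independent ((\<lambda>k. matpow A k *v b) ` {..<CARD('n)})"
    and "span ((\<lambda>k. matpow A k *v b) ` {..<CARD('n)}) = UNIV"
proof -
  let ?f = "\<lambda>k. matpow A k *v b"
  let ?V = "?f ` {..<CARD('n)}"
  have "{matpow A k *v b | k. k < CARD('n)} = ?V"
    by auto
  then have dim_V: "dim ?V = CARD('n)"
    using assms by (simp add: kalman_rank_def)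
  have "dim ?V \<le> card ?V"
    by (rule dim_le_card) (simp_all add: span_superset)
  moreover have "card ?V \<le> CARD('n)"
    using card_image_le[of "{..<CARD('n)}" ?f] by simp
  ultimately have card_V: "card ?V = CARD('n)"
    using dim_V by linarith
  show "inj_on ?f {..<CARD('n)}"
    using card_V by (intro eq_card_imp_inj_on) auto
  show "span ?V = UNIV"
    using dim_V dim_eq_full[of ?V] by simp
  show "independent ?V"
    by (rule card_le_dim_spanning[of ?V ?V]) (simp_all add: span_superset card_V dim_V)
qed

lemma kalman_rank_full_imp_functional:
  fixes A :: "real^'n^'n" and b :: "real^'n"
  assumes "kalman_rank A b = CARD('n)"
  obtains g :: "real^'n \<Rightarrow> real"
  where "linear g" "\<And>k. k < CARD('n) \<Longrightarrow> g (matpow A k *v b) = (if k = CARD('n) - 1 then 1 else 0)"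
proof -
  let ?f = "\<lambda>k. matpow A k *v b"
  have "\<exists>g. linear g \<and> (\<forall>x\<in>?f ` {..<CARD('n)}.
      g x = (\<lambda>x. if x = ?f (CARD('n) - 1) then 1 else 0 :: real) x)"
    by (rule linear_independent_extend[OF kalman_rank_full_imp_basis(2)[OF assms]])
  then obtain g :: "real^'n \<Rightarrow> real" where g: "linear g"
    and g_basis: "\<forall>x\<in>?f ` {..<CARD('n)}. g x = (if x = ?f (CARD('n) - 1) then 1 else 0)"
    by auto
  have "g (?f k) = (if k = CARD('n) - 1 then 1 else 0)" if "k < CARD('n)" for k
  proof -
    have "?f k = ?f (CARD('n) - 1) \<longleftrightarrow> k = CARD('n) - 1"
      using that inj_on_eq_iff[OF kalman_rank_full_imp_basis(1)[OF assms], of k "CARD('n) - 1"] by simp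
    then show ?thesis
      using g_basis that by simp
  qed
  with g show ?thesis
    by (rule that)
qed

text \<open>If \<open>v = \<Sum>\<beta>\<^sub>k A\<^sup>k b\<close> and \<open>k\<^sub>0\<close> is the largest index with \<open>\<beta>\<^sub>k\<^sub>0 \<noteq> 0\<close>, then
  \<open>g (A\<^sup>n\<^sup>-\<^sup>1\<^sup>-\<^sup>k\<^sup>0 v) = \<beta>\<^sub>k\<^sub>0\<close>, because \<open>g (A\<^sup>m b)\<close> vanishes for \<open>m < n - 1\<close>.\<close>

lemma kalman_observable:
  fixes A :: "real^'n^'n" and b :: "real^'n" and g :: "real^'n \<Rightarrow> real"
  assumes "kalman_rank A b = CARD('n)" "linear g"
    and g_basis: "\<And>k. k < CARD('n) \<Longrightarrow> g (matpow A k *v b) = (if k = CARD('n) - 1 then 1 else 0)"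
    and zero: "\<And>j. j < CARD('n) \<Longrightarrow> g (matpow A j *v v) = 0"
  shows "v = 0"
proof (rule ccontr)
  assume "v \<noteq> 0"
  let ?f = "\<lambda>k. matpow A k *v b"
  let ?n = "CARD('n)"
  have "v \<in> span (?f ` {..<?n})"
    using kalman_rank_full_imp_basis(3)[OF assms(1)] by simp
  then obtain \<beta> where "v = (\<Sum>u\<in>?f ` {..<?n}. \<beta> u *\<^sub>R u)"
    using span_finite[of "?f ` {..<?n}"] by auto
  then have v: "v = (\<Sum>k<?n. \<beta> (?f k) *\<^sub>R ?f k)"
    by (simp add: sum.reindex[OF kalman_rank_full_imp_basis(1)[OF assms(1)]])
  have g_v: "g (matpow A j *v v) = (\<Sum>k<?n. \<beta> (?f k) * g (?f (j + k)))" for j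
    by (simp add: v linear_sum[OF matrix_vector_mul_linear] linear_sum[OF assms(2)]
        linear_scale[OF assms(2)] matpow_mult_matpow_vec matrix_vector_mult_scaleR)
  define K where "K = {k. k < ?n \<and> \<beta> (?f k) \<noteq> 0}"
  have "K \<noteq> {}"
    using \<open>v \<noteq> 0\<close> v by (auto simp: K_def intro: sum.neutral)
  define k0 where "k0 = Max K"
  have "k0 \<in> K"
    using Max_in[of K] \<open>K \<noteq> {}\<close> by (simp add: k0_def K_def)
  then have "k0 < ?n"
    by (simp add: K_def)
  have "\<beta> (?f k) * g (?f (?n - 1 - k0 + k)) = (if k = k0 then \<beta> (?f k0) else 0)" if "k < ?n" for k
  proof (cases "k = k0 \<or> \<beta> (?f k) = 0")
    case True
    moreover have "?n - 1 - k0 + k0 = ?n - 1"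
      using \<open>k0 < ?n\<close> by simp
    ultimately show ?thesis
      using g_basis[of "?n - 1"] by auto
  next
    case False
    then have "k \<in> K"
      using that by (simp add: K_def)
    then have "k \<le> k0"
      unfolding k0_def by (rule Max_ge[rotated]) (simp add: K_def)
    then have "k < k0"
      using False by simp
    then have "?n - 1 - k0 + k < ?n - 1"
      using \<open>k0 < ?n\<close> by simp
    then show ?thesis
      using g_basis[of "?n - 1 - k0 + k"] \<open>k < k0\<close> by simp
  qed
  then have "g (matpow A (?n - 1 - k0) *v v) = \<beta> (?f k0)"
    using \<open>k0 < ?n\<close> by (simp add: g_v)
  then show False
    using zero[of "?n - 1 - k0"] \<open>k0 \<in> K\<close> by (simp add: K_def)
qed

text \<open>\<open>e\<close> is the basis dual to the observer coordinates \<open>g (A\<^sup>k x)\<close>, \<open>k < n\<close>.\<close>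

definition observer_frame ::
  "real^'n^'n \<Rightarrow> real^'n \<Rightarrow> (real^'n \<Rightarrow> real) \<Rightarrow> (nat \<Rightarrow> real^'n) \<Rightarrow> bool" where
  "observer_frame A b g e \<longleftrightarrow> linear g \<and>
     (\<forall>k<CARD('n). g (matpow A k *v b) = (if k = CARD('n) - 1 then 1 else 0)) \<and>
     (\<forall>j<CARD('n). \<forall>k<CARD('n). g (matpow A j *v e k) = (if j = k then 1 else 0)) \<and>
     (\<forall>w. w = (\<Sum>k<CARD('n). g (matpow A k *v w) *\<^sub>R e k))"

lemma dual_basis_of_injective_functionals:
  fixes L :: "nat \<Rightarrow> real^'n \<Rightarrow> real"
  assumes lin: "\<And>j. linear (L j)"
    and inj: "\<And>v. (\<And>j. j < CARD('n) \<Longrightarrow> L j v = 0) \<Longrightarrow> v = 0"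
  obtains e :: "nat \<Rightarrow> real^'n" where
    "\<And>j k. j < CARD('n) \<Longrightarrow> k < CARD('n) \<Longrightarrow> L j (e k) = (if j = k then 1 else 0)"
    "\<And>w. (\<Sum>k<CARD('n). L k w *\<^sub>R e k) = w"
proof -
  let ?n = "CARD('n)"
  have "\<exists>h. bij_betw h {0..<?n} (UNIV :: 'n set)"
    by (rule ex_bij_betw_nat_finite) simp
  then obtain h where h: "bij_betw h {..<?n} (UNIV :: 'n set)"
    by (auto simp: atLeast0LessThan)
  define h' where "h' = the_inv_into {..<?n} h"
  have h'_h: "h' (h k) = k" if "k < ?n" for k
    using the_inv_into_f_f[OF bij_betw_imp_inj_on[OF h]] that by (simp add: h'_def)
  define Om :: "real^'n \<Rightarrow> real^'n" where "Om v = (\<chi> i. L (h' i) v)" for v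
  have "linear Om"
    by (rule linearI) (simp_all add: Om_def vec_eq_iff linear_add[OF lin] linear_scale[OF lin])
  moreover have "inj Om"
    unfolding linear_inj_iff_eq_0[OF \<open>linear Om\<close>]
  proof (intro allI impI)
    fix v assume "Om v = 0"
    have "L j v = Om v $ h j" if "j < ?n" for j
      using h'_h[OF that] by (simp add: Om_def)
    with \<open>Om v = 0\<close> show "v = 0"
      by (intro inj) simp
  qed
  ultimately obtain Oi where Om_Oi: "\<forall>w. Om (Oi w) = w"
    using linear_injective_isomorphism by blast
  define e where "e k = Oi (axis (h k) 1)" for k
  have dual: "L j (e k) = (if j = k then 1 else 0)" if "j < ?n" "k < ?n" for j k
  proof -
    have "L j (e k) = Om (e k) $ h j"
      using h'_h[OF that(1)] by (simp add: Om_def)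
    also have "\<dots> = (if h k = h j then 1 else 0)"
      by (simp add: e_def Om_Oi axis_def)
    finally show ?thesis
      using bij_betw_imp_inj_on[OF h] that by (auto dest: inj_onD)
  qed
  have expansion: "(\<Sum>k<?n. L k w *\<^sub>R e k) = w" for w
  proof (subst eq_commute, subst eq_iff_diff_eq_0, rule inj)
    show "L j (w - (\<Sum>k<?n. L k w *\<^sub>R e k)) = 0" if "j < ?n" for j
      using that by (simp add: linear_diff[OF lin] linear_sum[OF lin] linear_scale[OF lin] dual
          if_distrib[of "\<lambda>c. _ * c"] cong: if_cong)
  qed
  show ?thesis
    by (rule that[of e]) (use dual expansion in auto)
qed

lemma kalman_rank_full_imp_observer_frame:
  fixes A :: "real^'n^'n" and b :: "real^'n"
  assumes "kalman_rank A b = CARD('n)"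
  obtains g e where "observer_frame A b g e"
proof -
  obtain g :: "real^'n \<Rightarrow> real" where g: "linear g"
    and g_basis: "\<And>k. k < CARD('n) \<Longrightarrow> g (matpow A k *v b) = (if k = CARD('n) - 1 then 1 else 0)"
    using kalman_rank_full_imp_functional[OF assms] by blast
  have "linear (\<lambda>v. g (matpow A j *v v))" for j
    using linear_compose[OF matrix_vector_mul_linear g] by (simp add: o_def)
  then obtain e where "\<And>j k. j < CARD('n) \<Longrightarrow> k < CARD('n) \<Longrightarrow>
      g (matpow A j *v e k) = (if j = k then 1 else 0)"
    and "\<And>w. (\<Sum>k<CARD('n). g (matpow A k *v w) *\<^sub>R e k) = w"
    using dual_basis_of_injective_functionals[of "\<lambda>j v. g (matpow A j *v v)"]
      kalman_observable[OF assms g g_basis]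
    by blast
  with g g_basis show ?thesis
    by (intro that[of g e]) (simp add: observer_frame_def)
qed

lemma observer_frame_coordinate_linear:
  fixes A :: "real^'n^'n"
  shows "observer_frame A b g e \<Longrightarrow> linear (\<lambda>w. g (matpow A j *v w))"
  using linear_compose[OF matrix_vector_mul_linear, of g] by (simp add: observer_frame_def o_def)

lemma observer_frame_coordinate_sum:
  fixes A :: "real^'n^'n"
  assumes frame: "observer_frame A b g e" and "j < CARD('n)"
  shows "g (matpow A j *v (\<Sum>k<CARD('n). c k *\<^sub>R e k)) = c j"
proof -
  have "g (matpow A j *v e k) = (if j = k then 1 else 0)" if "k < CARD('n)" for k
    using frame assms(2) that by (simp add: observer_frame_def)
  then show ?thesis
    using assms(2)
    by (simp add: linear_sum[OF observer_frame_coordinate_linear[OF frame]]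
        linear_scale[OF observer_frame_coordinate_linear[OF frame]] if_distrib[of "\<lambda>c. _ * c"] cong: if_cong)
qed

lemma observer_frame_coordinate_step:
  fixes A :: "real^'n^'n"
  assumes frame: "observer_frame A b g e" and "k < CARD('n)"
  shows "g (matpow A k *v (A *v w + c *\<^sub>R b))
    = g (matpow A (Suc k) *v w) + (if k = CARD('n) - 1 then c else 0)"
proof -
  have g: "linear g" and "g (matpow A k *v b) = (if k = CARD('n) - 1 then 1 else 0)"
    using frame assms(2) by (simp_all add: observer_frame_def)
  then show ?thesis
    by (simp add: matrix_vector_right_distrib matrix_vector_mult_scaleR matpow_mult_vec_Suc
        linear_add[OF g] linear_scale[OF g] del: matpow.simps)
qed

lemma has_integral_by_coordinates:
  fixes L :: "nat \<Rightarrow> 'a::real_normed_vector \<Rightarrow> real"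
  assumes expansion: "\<And>w. (\<Sum>k<n. L k w *\<^sub>R e k) = w"
    and coordinates: "\<And>k. k < n \<Longrightarrow> ((\<lambda>s. L k (f s)) has_integral c k) S"
  shows "(f has_integral (\<Sum>k<n. c k *\<^sub>R e k)) S"
proof -
  have "((\<lambda>s. \<Sum>k<n. L k (f s) *\<^sub>R e k) has_integral (\<Sum>k<n. c k *\<^sub>R e k)) S"
    using coordinates by (intro has_integral_sum has_integral_scaleR_left) auto
  then show ?thesis
    by (simp add: expansion)
qed

lemma delay_solution_of_observer_chain:
  fixes A :: "real^'n^'n" and b :: "real^'n" and z :: "nat \<Rightarrow> real \<Rightarrow> real"
  assumes frame: "observer_frame A b g e"
    and history: "\<And>k t. t < 0 \<Longrightarrow> k < CARD('n) \<Longrightarrow> z k t = g (matpow A k *v x0 t)"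
    and init: "\<And>k. k < CARD('n) \<Longrightarrow> z k 0 = g (matpow A k *v y)"
    and cont: "\<And>k. k < CARD('n) \<Longrightarrow> continuous_on {0..T} (z k)"
    and chain: "\<And>k t. Suc k < CARD('n) \<Longrightarrow> 0 \<le> t \<Longrightarrow>
      ((\<lambda>s. z (Suc k) (s - 1)) has_integral (z k t - z k 0)) {0..t}"
    and top: "\<And>t. 0 \<le> t \<Longrightarrow> (v has_integral (z (CARD('n) - 1) t - z (CARD('n) - 1) 0)) {0..t}"
    and x_def: "x = (\<lambda>t. if t < 0 then x0 t else \<Sum>k<CARD('n). z k t *\<^sub>R e k)"
    and u_def: "u = (\<lambda>s. v s - g (matpow A CARD('n) *v x (s - 1)))"
  shows "delay_solution A b u y x0 T x"
proof -
  let ?n = "CARD('n)"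
  have expansion: "\<And>w. (\<Sum>k<?n. g (matpow A k *v w) *\<^sub>R e k) = w"
    using frame by (simp add: observer_frame_def)
  have coordinate: "g (matpow A j *v x r) = z j r" if "-1 \<le> r" "j < ?n" for j r
    using that history observer_frame_coordinate_sum[OF frame] by (simp add: x_def)
  have x_0: "x 0 = y"
    using expansion[of y] by (simp add: x_def init)
  have increment: "x t - y = (\<Sum>k<?n. (z k t - z k 0) *\<^sub>R e k)" if "0 \<le> t" for t
    using that expansion[of y] by (simp add: x_def init scaleR_diff_left sum_subtractf)
  have "continuous_on {0..T} x"
    by (rule continuous_on_eq[of _ "\<lambda>t. \<Sum>k<?n. z k t *\<^sub>R e k"])
       (auto simp: x_def intro!: continuous_intros cont)
  moreover have "((\<lambda>s. A *v x (s - 1) + u s *\<^sub>R b) has_integral (x t - y)) {0..t}" if "0 \<le> t" for t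
    unfolding increment[OF that]
  proof (rule has_integral_by_coordinates[OF expansion])
    fix k assume "k < ?n"
    have "((\<lambda>s. if Suc k < ?n then z (Suc k) (s - 1) else v s) has_integral (z k t - z k 0)) {0..t}"
    proof (cases "Suc k < ?n")
      case True
      then show ?thesis
        using chain[OF True \<open>0 \<le> t\<close>] by simp
    next
      case False
      then have "k = ?n - 1"
        using \<open>k < ?n\<close> by simp
      then show ?thesis
        using top[OF \<open>0 \<le> t\<close>] False by simp
    qed
    moreover have "g (matpow A k *v (A *v x (s - 1) + u s *\<^sub>R b))
        = (if Suc k < ?n then z (Suc k) (s - 1) else v s)" if "0 \<le> s" for s
    proof (cases "Suc k < ?n")
      case True
      then show ?thesis
        using coordinate[of "s - 1" "Suc k"] that observer_frame_coordinate_step[OF frame \<open>k < ?n\<close>]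
        by simp
    next
      case False
      then have "Suc k = ?n" "k = ?n - 1"
        using \<open>k < ?n\<close> by arith+
      then show ?thesis
        using observer_frame_coordinate_step[OF frame \<open>k < ?n\<close>] False
        by (simp add: u_def del: matpow.simps)
    qed
    ultimately show "((\<lambda>s. g (matpow A k *v (A *v x (s - 1) + u s *\<^sub>R b))) has_integral (z k t - z k 0)) {0..t}"
      by (subst has_integral_cong) auto
  qed
  ultimately show ?thesis
    using x_0 by (simp add: delay_solution_def x_def)
qed

lemma delay_solution_unique:
  assumes x: "delay_solution A b u y x0 T x" and x': "delay_solution A b u y x0 T x'"
    and t: "t \<in> {-1..T}"
  shows "x' t = x t"
proof -
  have "x' t = x t" if "t \<in> {-1..T}" "t < real m" for m t
    using that
  proof (induction m arbitrary: t)
    case 0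
    then show ?case
      using x x' by (simp add: delay_solution_def)
  next
    case (Suc m)
    show ?case
    proof (cases "t < 0")
      case True
      then show ?thesis
        using x x' Suc.prems by (simp add: delay_solution_def)
    next
      case False
      then have "t \<in> {0..T}"
        using Suc.prems by simp
      have "A *v x' (s - 1) + u s *\<^sub>R b = A *v x (s - 1) + u s *\<^sub>R b" if "s \<in> {0..t}" for s
        using Suc.IH[of "s - 1"] Suc.prems that by simp
      then have "((\<lambda>s. A *v x' (s - 1) + u s *\<^sub>R b) has_integral (x' t - y)) {0..t}
          = ((\<lambda>s. A *v x (s - 1) + u s *\<^sub>R b) has_integral (x' t - y)) {0..t}"
        by (rule has_integral_cong)
      moreover have "((\<lambda>s. A *v x' (s - 1) + u s *\<^sub>R b) has_integral (x' t - y)) {0..t}"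
        using x' \<open>t \<in> {0..T}\<close> unfolding delay_solution_def by blast
      moreover have "((\<lambda>s. A *v x (s - 1) + u s *\<^sub>R b) has_integral (x t - y)) {0..t}"
        using x \<open>t \<in> {0..T}\<close> unfolding delay_solution_def by blast
      ultimately have "x' t - y = x t - y"
        using has_integral_unique by blast
      then show ?thesis
        by simp
    qed
  qed
  moreover obtain m :: nat where "t < real m"
    using reals_Archimedean2 by blast
  ultimately show ?thesis
    using t by blast
qed

lemma L2_on_delayed_state:
  assumes sol: "delay_solution A b u y x0 T x" and "L2_on {-1..0} x0" "1 \<le> T"
  shows "L2_on {0<..<T} (\<lambda>s. x (s - 1))"
proof -
  have "L2_on {-1..<0} x0"
    by (rule L2_on_subset[OF assms(2)]) auto
  then have "L2_on {-1..<0} x"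
    by (subst L2_on_cong[of _ _ x0]) (use sol in \<open>auto simp: delay_solution_def\<close>)
  moreover have "continuous_on {0..T - 1} x"
    using sol unfolding delay_solution_def by (auto elim: continuous_on_subset)
  ultimately have "L2_on {0<..<T - 1 + 1} (\<lambda>s. x (s - 1))"
    using assms(3) by (intro L2_on_delayed) auto
  then show ?thesis
    by simp
qed

lemma observer_frame_null_control:
  fixes A :: "real^'n^'n" and b :: "real^'n" and x0 :: "real \<Rightarrow> real^'n"
  assumes frame: "observer_frame A b g e" and "real CARD('n) < T" and x0: "L2_on {-1..0} x0"
  obtains u x where "L2_on {0<..<T} u" "delay_solution A b u y x0 T x"
    "\<And>t. t \<in> {T - 1..T} \<Longrightarrow> x t = 0"
proof -
  let ?n = "CARD('n)"
  have "1 \<le> real ?n"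
    by simp
  then have "1 \<le> T"
    using assms(2) by linarith
  have "real (?n - 1) + 1 < T"
    using assms(2) by (simp add: of_nat_diff)
  have obs: "bounded_linear (\<lambda>w. g (matpow A k *v w))" for k
    using observer_frame_coordinate_linear[OF frame] by (simp add: linear_conv_bounded_linear)
  have dat: "(\<lambda>t. g (matpow A k *v x0 t)) integrable_on {-1..0}" for k
    using integrable_linear[OF L2_on_imp_integrable_on[OF x0] obs] by (simp add: o_def)
  obtain z v where
    history: "\<And>k t. t < 0 \<Longrightarrow> k \<le> ?n - 1 \<Longrightarrow> z k t = g (matpow A k *v x0 t)"
    and init: "\<And>k. k \<le> ?n - 1 \<Longrightarrow> z k 0 = g (matpow A k *v y)"
    and cont: "\<And>k. k \<le> ?n - 1 \<Longrightarrow> continuous_on {0..T} (z k)"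
    and chain: "\<And>k t. k < ?n - 1 \<Longrightarrow> 0 \<le> t \<Longrightarrow>
        ((\<lambda>s. z (Suc k) (s - 1)) has_integral (z k t - z k 0)) {0..t}"
    and top: "\<And>t. 0 \<le> t \<Longrightarrow> (v has_integral (z (?n - 1) t - z (?n - 1) 0)) {0..t}"
    and null: "\<And>k t. k \<le> ?n - 1 \<Longrightarrow> T - 1 \<le> t \<Longrightarrow> t \<le> T \<Longrightarrow> z k t = 0"
    and v: "L2_on {0<..<T} v"
    using delay_chain_null_controllable[where dat = "\<lambda>k t. g (matpow A k *v x0 t)"
        and iv = "\<lambda>k. g (matpow A k *v y)", OF dat \<open>real (?n - 1) + 1 < T\<close>]
    by blast
  define x where "x = (\<lambda>t. if t < 0 then x0 t else \<Sum>k<?n. z k t *\<^sub>R e k)"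
  define u where "u = (\<lambda>s. v s - g (matpow A ?n *v x (s - 1)))"
  have sol: "delay_solution A b u y x0 T x"
    by (rule delay_solution_of_observer_chain[OF frame _ _ _ _ top x_def u_def])
       (use history init cont chain in auto)
  show ?thesis
  proof (rule that[OF _ sol])
    show "L2_on {0<..<T} u"
      using L2_on_diff[OF v L2_on_bounded_linear[OF obs L2_on_delayed_state[OF sol x0 \<open>1 \<le> T\<close>]]]
      by (simp add: u_def)
    show "x t = 0" if "t \<in> {T - 1..T}" for t
      using null that \<open>1 \<le> T\<close> by (simp add: x_def)
  qed
qed

theorem mainTheorem4:
  fixes A :: "real^'n^'n" and b :: "real^'n" and T :: real
    and y :: "real^'n" and x0 :: "real \<Rightarrow> real^'n"
  assumes "kalman_rank A b = CARD('n)"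
    and "T > real CARD('n)"
    and "L2_on {-1..0} x0"
  shows "\<exists>u :: real \<Rightarrow> real. L2_on {0<..<T} u
           \<and> (\<exists>x. delay_solution A b u y x0 T x)
           \<and> (\<forall>x. delay_solution A b u y x0 T x \<longrightarrow> (\<forall>t\<in>{T-1..T}. x t = 0))"
proof -
  obtain g e where frame: "observer_frame A b g e"
    using kalman_rank_full_imp_observer_frame[OF assms(1)] .
  obtain u x where u: "L2_on {0<..<T} u" and sol: "delay_solution A b u y x0 T x"
    and null: "\<And>t. t \<in> {T - 1..T} \<Longrightarrow> x t = 0"
    using observer_frame_null_control[OF frame assms(2,3), where y = y] by blast
  have "x' t = 0" if "delay_solution A b u y x0 T x'" "t \<in> {T - 1..T}" for x' t
  proof -
    have "0 \<le> T"
      using assms(2) of_nat_0_le_iff[of "CARD('n)"] by linarith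
    then show ?thesis
      using delay_solution_unique[OF sol that(1)] null[OF that(2)] that(2) by simp
  qed
  then show ?thesis
    using u sol by blast
qed

end
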